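(* Let $n,N,L\ge1$ be integers and $0<p<1$. In the random model described in the context, for a read $(\mathbf{y},\mathbf{d}')\in\mathcal{Y}$ whose address part $\mathbf{y}$ has exactly $r$ erased positions, $$\mathbb{E}\big[|\mathcal{N}_{(\mathbf{y},\mathbf{d}')}|\;\big|\;(\mathbf{y},\mathbf{d}')\big]=N2^r(1+p)^{n-r}-1.$$ Further, $\mathbb{E}\big[|\mathcal{N}_{(\mathbf{y},\mathbf{d}')}|\big]=N(1+2p-p^2)^{n}-1$.
   Context: Model: Let $M=2^n$ and $C=\{0,1\}^n$ (addresses). Data parts are independent and uniform on $\{0,1\}^L$; each address $\mathbf{x}\in C$ carries one strand $(\mathbf{x},\mathbf{d})$. Each strand is transmitted $N$ times through $\mathsf{BEC}(p)$ (each symbol independently replaced by $*$ with probability $p$, independently across transmissions and strands); $\mathcal{Y}$ is the multiset of all $MN$ reads $(\mathbf{y},\mathbf{d}')$. An address $\mathbf{x}$ is compatible with a read $(\mathbf{y},\mathbf{d}')$ if $\mathbf{x}$ and $\mathbf{y}$ coincide at all non-erased positions of $\mathbf{y}$. The bipartite graph $\mathcal{G}$ has left vertices $C$, right vertices $\mathcal{Y}$, and an edge between $\mathbf{x}$ and $(\mathbf{y},\mathbf{d}')$ iff $\mathbf{x}$ is compatible with $(\mathbf{y},\mathbf{d}')$. The two-hop neighbourhood $\mathcal{N}_{(\mathbf{y},\mathbf{d}')}$ is the multiset of reads other than $(\mathbf{y},\mathbf{d}')$ itself that share at least one left neighbour with $(\mathbf{y},\mathbf{d}')$ in $\mathcal{G}$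 (equivalently, whose address part coincides with $\mathbf{y}$ at all positions where neither is erased). *)

theory Defs
  imports "HOL-Probability.Probability"
begin

definition erase_sym :: "real \<Rightarrow> 'a \<Rightarrow> 'a option pmf" where
  "erase_sym p a = map_pmf (\<lambda>e. if e then None else Some a) (bernoulli_pmf p)"

fun bec :: "real \<Rightarrow> 'a list \<Rightarrow> 'a option list pmf" where
  "bec p [] = return_pmf []"
| "bec p (a # xs) = bind_pmf (erase_sym p a) (\<lambda>b. map_pmf (\<lambda>bs. b # bs) (bec p xs))"

definition words :: "nat \<Rightarrow> bool list set" where
  "words n = {x. length x = n}"

type_synonym read = "bool option list \<times> bool option list"

text \<open>The random experiment: data parts D (independent uniform), and for every strand
  (x, D x), x in C = words n, and every transmission j < N, a read R (x, j) obtained by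
  passing the strand (address part and data part) through BEC(p).\<close>
definition dna_experiment :: "nat \<Rightarrow> nat \<Rightarrow> nat \<Rightarrow> real \<Rightarrow>
    ((bool list \<Rightarrow> bool list) \<times> (bool list \<times> nat \<Rightarrow> read)) pmf" where
  "dna_experiment n N L p =
     bind_pmf (Pi_pmf (words n) undefined (\<lambda>x. pmf_of_set (words L))) (\<lambda>D.
     bind_pmf (Pi_pmf (words n \<times> {..<N}) undefined
                 (\<lambda>(x, j). pair_pmf (bec p x) (bec p (D x)))) (\<lambda>R.
     return_pmf (D, R)))"

definition compatible :: "bool list \<Rightarrow> bool option list \<Rightarrow> bool" where
  "compatible x y \<longleftrightarrow> length y = length x \<and>
     (\<forall>i < length y. y ! i = None \<or> y ! i = Some (x ! i))"

definition share_neighbour :: "nat \<Rightarrow> read \<Rightarrow> read \<Rightarrow> bool" where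
  "share_neighbour n u v \<longleftrightarrow> (\<exists>z \<in> words n. compatible z (fst u) \<and> compatible z (fst v))"

text \<open>Size of the two-hop neighbourhood (as a multiset) of the read with index (x0, j0).\<close>
definition nbhd_size :: "nat \<Rightarrow> nat \<Rightarrow> (bool list \<times> nat \<Rightarrow> read) \<Rightarrow> bool list \<times> nat \<Rightarrow> nat" where
  "nbhd_size n N R k0 =
     card {k \<in> words n \<times> {..<N}. k \<noteq> k0 \<and> share_neighbour n (R k) (R k0)}"

definition num_erased :: "'a option list \<Rightarrow> nat" where
  "num_erased y = length (filter (\<lambda>c. c = None) y)"

end

theory Submission
  imports Defs
begin

(* Fix the read with index k0 = (x0, j0) and condition on its value (y, d').  The address part of
   every other read k = (x, j) is still a BEC(p) image of x, independent of the conditioning, and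
   it shares a left neighbour with y iff the two partial words are consistent (agree wherever
   neither is erased).  Where y is unerased and differs from x the read must have been erased, so
   consistency has probability p^(number of such positions).  Summing this product over all
   addresses x factorises over positions: an erased position of y contributes 1 + 1 = 2, an
   unerased one 1 + p.  Hence each transmission index j contributes 2^r (1 + p)^(n - r), and the
   read k0 itself, which contributes 1, is removed.  The unconditional expectation follows by the
   law of total expectation over y ~ BEC(p)(x0): per position 2 p + (1 + p)(1 - p) = 1 + 2 p - p^2. *)

lemma integral_bind_pmf_bounded:
  fixes f :: "'b \<Rightarrow> real"
  assumes "\<And>x. \<bar>f x\<bar> \<le> B"
  shows "measure_pmf.expectation (bind_pmf M N) f =
    measure_pmf.expectation M (\<lambda>x. measure_pmf.expectation (N x) f)"
  unfolding measure_pmf_bind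
proof (rule integral_bind[where K = "count_space UNIV" and B = B and B' = 1])
  show "(\<lambda>x. measure_pmf (N x)) \<in> measurable (measure_pmf M) (subprob_algebra (count_space UNIV))"
    by measurable
qed (auto simp: assms measure_pmf.emeasure_space_1 prob_space.finite_measure
          measure_pmf.prob_space_axioms)

lemma bind_map_cond_pmf:
  "bind_pmf (map_pmf X M) (\<lambda>v. cond_pmf M {\<omega>. X \<omega> = v}) = M"
proof (rule bind_cond_pmf_cancel)
  fix v assume "v \<in> set_pmf (map_pmf X M)"
  then show "set_pmf M \<inter> {\<omega>. X \<omega> = v} \<noteq> {}" by auto
next
  fix \<omega> assume "\<omega> \<in> set_pmf M"
  then show "set_pmf (map_pmf X M) \<inter> {v. X \<omega> = v} \<noteq> {}" by auto
next
  fix v \<omega> assume "X \<omega> = v"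
  then have "{v'. X \<omega> = v'} = {v}" "X -` {v} = {\<omega>. X \<omega> = v}" by auto
  then show "measure_pmf.prob M {\<omega>. X \<omega> = v} = measure_pmf.prob (map_pmf X M) {v'. X \<omega> = v'}"
    by (simp add: measure_map_pmf)
qed

lemma expectation_cond_pmf_total:
  fixes f :: "'a \<Rightarrow> real"
  assumes "\<And>\<omega>. \<bar>f \<omega>\<bar> \<le> B"
  shows "measure_pmf.expectation M f =
    measure_pmf.expectation (map_pmf X M) (\<lambda>v. measure_pmf.expectation (cond_pmf M {\<omega>. X \<omega> = v}) f)"
  using integral_bind_pmf_bounded[OF assms, of "map_pmf X M" "\<lambda>v. cond_pmf M {\<omega>. X \<omega> = v}"]
  by (simp only: bind_map_cond_pmf)

lemma cond_pmf_pair_pmf_fst: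
  assumes "v \<in> set_pmf A"
  shows "cond_pmf (pair_pmf A B) ({v} \<times> UNIV) = pair_pmf (return_pmf v) B"
proof (rule pmf_eqI)
  fix ab :: "'a \<times> 'b"
  have ne: "set_pmf (pair_pmf A B) \<inter> {v} \<times> UNIV \<noteq> {}"
    using assms set_pmf_not_empty[of B] by auto
  have "measure_pmf.prob (pair_pmf A B) ({v} \<times> UNIV) = pmf A v"
    using measure_map_pmf[of fst "pair_pmf A B" "{v}"]
    by (simp add: map_fst_pair_pmf measure_pmf_single vimage_fst)
  moreover have "pmf A v > 0"
    using assms by (simp add: pmf_positive)
  ultimately show "pmf (cond_pmf (pair_pmf A B) ({v} \<times> UNIV)) ab = pmf (pair_pmf (return_pmf v) B) ab"
    by (cases ab) (simp add: pmf_cond[OF ne] pmf_pair)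
qed

lemma map_pmf_cond_pmf_independent:
  assumes joint: "map_pmf (\<lambda>\<omega>. (X \<omega>, Y \<omega>)) M = pair_pmf A B" and "v \<in> set_pmf A"
  shows "map_pmf Y (cond_pmf M {\<omega>. X \<omega> = v}) = B"
proof -
  let ?g = "\<lambda>\<omega>. (X \<omega>, Y \<omega>)"
  have event: "{\<omega>. X \<omega> = v} = ?g -` ({v} \<times> UNIV)" by auto
  have "set_pmf (map_pmf ?g M) \<inter> {v} \<times> UNIV \<noteq> {}"
    using assms set_pmf_not_empty[of B] by (auto simp: joint)
  then have ne: "set_pmf M \<inter> ?g -` ({v} \<times> UNIV) \<noteq> {}" by auto
  have "map_pmf Y (cond_pmf M {\<omega>. X \<omega> = v}) =
      map_pmf snd (map_pmf ?g (cond_pmf M (?g -` ({v} \<times> UNIV))))"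
    by (simp add: event pmf.map_comp o_def)
  also have "\<dots> = map_pmf snd (cond_pmf (pair_pmf A B) ({v} \<times> UNIV))"
    by (simp only: cond_map_pmf[OF ne, symmetric] joint)
  also have "\<dots> = B"
    by (simp add: cond_pmf_pair_pmf_fst assms(2) map_snd_pair_pmf)
  finally show ?thesis .
qed

lemma map_pmf_Pi_pmf_two_components:
  assumes "finite A" "x \<in> A" "y \<in> A" "x \<noteq> y"
  shows "map_pmf (\<lambda>f. (f x, f y)) (Pi_pmf A dflt p) = pair_pmf (p x) (p y)"
proof -
  have A: "A = insert y (A - {y})" and fin: "finite (A - {y})" and x: "x \<in> A - {y}"
    using assms by auto
  have "map_pmf (\<lambda>f. (f x, f y)) (Pi_pmf A dflt p) =
      map_pmf (\<lambda>(b, f). (f x, b)) (pair_pmf (p y) (Pi_pmf (A - {y}) dflt p))"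
    using assms
    by (subst A, subst Pi_pmf_insert[OF fin]) (auto simp: pmf.map_comp o_def case_prod_unfold)
  also have "\<dots> = pair_pmf (map_pmf (\<lambda>f. f x) (Pi_pmf (A - {y}) dflt p)) (p y)"
    by (subst pair_commute_pmf)
       (simp add: pmf.map_comp o_def case_prod_unfold pair_map_pmf1 apfst_def map_prod_def)
  also have "\<dots> = pair_pmf (p x) (p y)"
    using x by (simp add: Pi_pmf_component[OF fin])
  finally show ?thesis .
qed

lemma bind_pmf_pair_pmf_left: "bind_pmf M (\<lambda>x. pair_pmf (A x) B) = pair_pmf (bind_pmf M A) B"
  by (simp add: pair_pmf_def bind_assoc_pmf)

lemma words_0: "words 0 = {[]}"
  by (simp add: words_def)

lemma words_Suc: "words (Suc n) = Cons True ` words n \<union> Cons False ` words n"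
  unfolding words_def by (auto simp: length_Suc_conv image_iff)

lemma finite_words: "finite (words n)"
  by (induction n) (simp_all add: words_0 words_Suc)

lemma sum_words_Suc:
  "(\<Sum>x\<in>words (Suc n). f x) = (\<Sum>x\<in>words n. f (True # x) + f (False # x))"
  by (subst words_Suc, subst sum.union_disjoint) (auto simp: finite_words sum.reindex sum.distrib)

lemma sum_words_prod_list_map2:
  fixes g :: "bool \<Rightarrow> 'a \<Rightarrow> 'b :: comm_semiring_1"
  shows "length y = n \<Longrightarrow>
    (\<Sum>x\<in>words n. prod_list (map2 g x y)) = prod_list (map (\<lambda>c. g True c + g False c) y)"
proof (induction y arbitrary: n)
  case Nil
  then show ?case by (simp add: words_0)
next
  case (Cons c y)
  then obtain m where "n = Suc m" "length y = m" by auto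
  then show ?case
    using Cons.IH by (simp add: sum_words_Suc sum.distrib sum_distrib_left[symmetric] distrib_right)
qed

lemma finite_set_bec: "finite (set_pmf (bec p x))"
  by (induction x) (simp_all add: erase_sym_def)

lemma compatible_Nil: "compatible [] y \<longleftrightarrow> y = []"
  by (auto simp: compatible_def)

lemma compatible_Cons_Cons:
  "compatible (b # x) (c # y) \<longleftrightarrow> (c = None \<or> c = Some b) \<and> compatible x y"
  by (auto simp: compatible_def nth_Cons split: nat.splits)

lemma compatible_length: "compatible x y \<Longrightarrow> length x = length y"
  by (simp add: compatible_def)

lemma compatible_set_bec: "y \<in> set_pmf (bec p x) \<Longrightarrow> compatible x y"
  by (induction x arbitrary: y)
     (auto simp: compatible_Nil compatible_Cons_Cons erase_sym_def split: if_splits)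

lemma expectation_bec_Cons:
  fixes F :: "'a option list \<Rightarrow> real"
  assumes "0 \<le> p" "p \<le> 1"
  shows "measure_pmf.expectation (bec p (a # xs)) F =
    p * measure_pmf.expectation (bec p xs) (\<lambda>y. F (None # y)) +
    (1 - p) * measure_pmf.expectation (bec p xs) (\<lambda>y. F (Some a # y))"
proof -
  have bec_Cons_bernoulli: "bec p (a # xs) =
      bind_pmf (bernoulli_pmf p) (\<lambda>e. map_pmf (Cons (if e then None else Some a)) (bec p xs))"
    by (simp add: erase_sym_def bind_map_pmf)
  show ?thesis
    unfolding bec_Cons_bernoulli using assms
    by (subst pmf_expectation_bind[where A = UNIV]) (auto simp: finite_set_bec UNIV_bool)
qed

definition consistent :: "'a option list \<Rightarrow> 'a option list \<Rightarrow> bool" where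
  "consistent = list_all2 (\<lambda>c d. c = None \<or> d = None \<or> c = d)"

lemma consistent_Cons_Cons:
  "consistent (c # a) (d # b) \<longleftrightarrow> (c = None \<or> d = None \<or> c = d) \<and> consistent a b"
  by (simp add: consistent_def)

lemma ex_compatible_iff_consistent:
  "length a = length b \<Longrightarrow> (\<exists>z. compatible z a \<and> compatible z b) \<longleftrightarrow> consistent a b"
proof (induction a b rule: list_induct2)
  case Nil
  then show ?case by (simp add: consistent_def compatible_def)
next
  case (Cons c a d b)
  have "(\<exists>z. compatible z (c # a) \<and> compatible z (d # b)) \<longleftrightarrow>
      (\<exists>w z. compatible (w # z) (c # a) \<and> compatible (w # z) (d # b))"
    by (metis compatible_Nil neq_Nil_conv)
  also have "\<dots> \<longleftrightarrow> (\<exists>w. (c = None \<or> c = Some w) \<and> (d = None \<or> d = Some w)) \<and>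
      (\<exists>z. compatible z a \<and> compatible z b)"
    by (simp add: compatible_Cons_Cons) blast
  also have "(\<exists>w. (c = None \<or> c = Some w) \<and> (d = None \<or> d = Some w)) \<longleftrightarrow>
      c = None \<or> d = None \<or> c = d"
    by (cases c; cases d) auto
  finally show ?case
    using Cons.IH by (simp add: consistent_Cons_Cons)
qed

definition consistency_weight :: "real \<Rightarrow> 'a \<Rightarrow> 'a option \<Rightarrow> real" where
  "consistency_weight p b c = (if c = None \<or> c = Some b then 1 else p)"

lemma prob_bec_consistent:
  assumes "0 \<le> p" "p \<le> 1"
  shows "length x = length y \<Longrightarrow>
    measure_pmf.prob (bec p x) {a. consistent a y} = prod_list (map2 (consistency_weight p) x y)"
proof (induction x y rule: list_induct2)
  case Nil
  then show ?case by (simp add: consistent_def)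
next
  case (Cons b x c y)
  let ?S = "\<lambda>y. {a. consistent a y}"
  let ?P = "measure_pmf.prob (bec p x) (?S y)"
  let ?C = "c = None \<or> c = Some b"
  have erased: "(\<lambda>a. indicator (?S (c # y)) (None # a)) = (indicator (?S y) :: _ \<Rightarrow> real)"
    by (auto simp: consistent_Cons_Cons indicator_def)
  have kept: "(\<lambda>a. indicator (?S (c # y)) (Some b # a)) =
      (if ?C then indicator (?S y) else (\<lambda>_. 0) :: _ \<Rightarrow> real)"
    by (auto simp: consistent_Cons_Cons indicator_def)
  have "measure_pmf.prob (bec p (b # x)) (?S (c # y)) =
      p * ?P + (1 - p) * measure_pmf.expectation (bec p x) (\<lambda>a. indicator (?S (c # y)) (Some b # a))"
    using expectation_bec_Cons[OF assms, of b x "indicator (?S (c # y))"]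
    by (simp del: bec.simps add: erased)
  also have "\<dots> = p * ?P + (1 - p) * (if ?C then ?P else 0)"
    by (simp add: kept)
  also have "\<dots> = consistency_weight p b c * ?P"
    by (simp add: consistency_weight_def algebra_simps)
  finally show ?case
    using Cons.IH by simp
qed

lemma prod_list_consistency_weight_compatible:
  assumes "compatible x y"
  shows "prod_list (map2 (consistency_weight p) x y) = 1"
proof -
  have "length x = length y"
    using assms by (rule compatible_length)
  then show ?thesis
    using assms
    by (induction x y rule: list_induct2) (auto simp: compatible_Cons_Cons consistency_weight_def)
qed

definition erasure_weight :: "real \<Rightarrow> 'a option list \<Rightarrow> real" where
  "erasure_weight p y = prod_list (map (\<lambda>c. if c = None then 2 else 1 + p) y)"

lemma erasure_weight_Cons:
  "erasure_weight p (c # y) = (if c = None then 2 else 1 + p) * erasure_weight p y"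
  by (simp add: erasure_weight_def)

lemma erasure_weight_eq_power:
  "erasure_weight p y = 2 ^ num_erased y * (1 + p) ^ (length y - num_erased y)"
proof (induction y)
  case Nil
  then show ?case by (simp add: erasure_weight_def num_erased_def)
next
  case (Cons c y)
  have "num_erased y \<le> length y"
    unfolding num_erased_def by (rule length_filter_le)
  then show ?case
    using Cons by (cases c) (simp_all add: erasure_weight_def num_erased_def Suc_diff_le)
qed

lemma sum_words_consistency_weight:
  "length y = n \<Longrightarrow> (\<Sum>x\<in>words n. prod_list (map2 (consistency_weight p) x y)) = erasure_weight p y"
  by (subst sum_words_prod_list_map2)
     (auto simp: erasure_weight_def consistency_weight_def intro!: arg_cong[where f = prod_list])

lemma expectation_bec_erasure_weight:
  assumes "0 \<le> p" "p \<le> 1"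
  shows "measure_pmf.expectation (bec p x) (erasure_weight p) = (1 + 2 * p - p\<^sup>2) ^ length x"
proof (induction x)
  case Nil
  then show ?case by (simp add: erasure_weight_def)
next
  case (Cons a x)
  let ?q = "1 + 2 * p - p\<^sup>2"
  have "measure_pmf.expectation (bec p (a # x)) (erasure_weight p) =
      p * (2 * ?q ^ length x) + (1 - p) * ((1 + p) * ?q ^ length x)"
    by (simp del: bec.simps add: expectation_bec_Cons[OF assms] erasure_weight_Cons Cons.IH)
  also have "\<dots> = ?q ^ length (a # x)"
    by (simp add: power2_eq_square algebra_simps)
  finally show ?case .
qed

lemma dna_experiment_eq:
  "dna_experiment n N L p =
    bind_pmf (Pi_pmf (words n) undefined (\<lambda>_. pmf_of_set (words L))) (\<lambda>D.
      map_pmf (Pair D) (Pi_pmf (words n \<times> {..<N}) undefined (\<lambda>(x, j). pair_pmf (bec p x) (bec p (D x)))))"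
  by (simp add: dna_experiment_def map_pmf_def)

lemma finite_read_indices: "finite (words n \<times> {..<N :: nat})"
  by (intro finite_cartesian_product finite_words finite_lessThan)

lemma map_pmf_read_dna_experiment:
  assumes "k \<in> words n \<times> {..<N}"
  shows "map_pmf (\<lambda>(D, R). R k) (dna_experiment n N L p) =
    bind_pmf (Pi_pmf (words n) undefined (\<lambda>_. pmf_of_set (words L)))
      (\<lambda>D. pair_pmf (bec p (fst k)) (bec p (D (fst k))))"
  using assms unfolding dna_experiment_eq
  by (simp add: map_bind_pmf pmf.map_comp o_def case_prod_unfold
      Pi_pmf_component[OF finite_read_indices])

lemma map_pmf_read_address_dna_experiment:
  assumes "k \<in> words n \<times> {..<N}"
  shows "map_pmf (\<lambda>(D, R). fst (R k)) (dna_experiment n N L p) = bec p (fst k)"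
proof -
  have "map_pmf (\<lambda>(D, R). fst (R k)) (dna_experiment n N L p) =
      map_pmf fst (map_pmf (\<lambda>(D, R). R k) (dna_experiment n N L p))"
    by (simp add: pmf.map_comp o_def case_prod_unfold)
  then show ?thesis
    by (simp add: map_pmf_read_dna_experiment[OF assms] map_bind_pmf map_fst_pair_pmf)
qed

lemma map_pmf_read_address_pair_dna_experiment:
  assumes "k0 \<in> words n \<times> {..<N}" "k \<in> words n \<times> {..<N}" "k \<noteq> k0"
  shows "map_pmf (\<lambda>(D, R). (R k0, fst (R k))) (dna_experiment n N L p) =
    pair_pmf (map_pmf (\<lambda>(D, R). R k0) (dna_experiment n N L p)) (bec p (fst k))"
proof -
  let ?F = "\<lambda>D (x, j). pair_pmf (bec p x) (bec p (D x))"
  have reads: "map_pmf (\<lambda>R. (R k0, fst (R k))) (Pi_pmf (words n \<times> {..<N}) undefined (?F D)) =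
      pair_pmf (pair_pmf (bec p (fst k0)) (bec p (D (fst k0)))) (bec p (fst k))" for D
  proof -
    have "map_pmf (\<lambda>R. (R k0, fst (R k))) (Pi_pmf (words n \<times> {..<N}) undefined (?F D)) =
        map_pmf (apsnd fst) (map_pmf (\<lambda>R. (R k0, R k)) (Pi_pmf (words n \<times> {..<N}) undefined (?F D)))"
      by (simp add: pmf.map_comp o_def)
    also have "\<dots> = pair_pmf (?F D k0) (map_pmf fst (?F D k))"
      using assms by (simp add: map_pmf_Pi_pmf_two_components finite_read_indices pair_map_pmf2)
    finally show ?thesis
      by (simp add: case_prod_unfold map_fst_pair_pmf)
  qed
  show ?thesis
    by (simp only: map_pmf_read_dna_experiment[OF assms(1)])
       (simp add: dna_experiment_eq map_bind_pmf pmf.map_comp o_def reads bind_pmf_pair_pmf_left)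
qed

lemma prob_bec_share_neighbour:
  assumes "0 \<le> p" "p \<le> 1" "x \<in> words n" "length y = n"
  shows "measure_pmf.prob (bec p x) {a. \<exists>z\<in>words n. compatible z a \<and> compatible z y} =
    prod_list (map2 (consistency_weight p) x y)"
proof -
  have "measure_pmf.prob (bec p x) {a. \<exists>z\<in>words n. compatible z a \<and> compatible z y} =
      measure_pmf.prob (bec p x) {a. consistent a y}"
  proof (rule measure_eq_AE)
    show "AE a in bec p x. a \<in> {a. \<exists>z\<in>words n. compatible z a \<and> compatible z y} \<longleftrightarrow>
        a \<in> {a. consistent a y}"
    proof (rule AE_pmfI)
      fix a assume "a \<in> set_pmf (bec p x)"
      then have "length a = n"
        using compatible_set_bec compatible_length assms(3) by (fastforce simp: words_def)
      then have "(\<exists>z\<in>words n. compatible z a \<and> compatible z y) \<longleftrightarrow> (\<exists>z. compatible z a \<and> compatible z y)"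
        by (auto simp: words_def dest: compatible_length)
      then show "a \<in> {a. \<exists>z\<in>words n. compatible z a \<and> compatible z y} \<longleftrightarrow> a \<in> {a. consistent a y}"
        using ex_compatible_iff_consistent[of a y] assms(4) \<open>length a = n\<close> by simp
    qed
  qed simp_all
  also have "\<dots> = prod_list (map2 (consistency_weight p) x y)"
    using assms by (intro prob_bec_consistent) (simp_all add: words_def)
  finally show ?thesis .
qed

lemma compatible_read_dna_experiment:
  assumes "k \<in> words n \<times> {..<N}" "v \<in> set_pmf (map_pmf (\<lambda>(D, R). R k) (dna_experiment n N L p))"
  shows "compatible (fst k) (fst v)"
proof -
  have "fst v \<in> set_pmf (map_pmf (\<lambda>(D, R). fst (R k)) (dna_experiment n N L p))"
    using assms(2) by auto
  then show ?thesis
    by (simp only: map_pmf_read_address_dna_experiment[OF assms(1)] compatible_set_bec)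
qed

lemma length_read_dna_experiment:
  assumes "k \<in> words n \<times> {..<N}" "v \<in> set_pmf (map_pmf (\<lambda>(D, R). R k) (dna_experiment n N L p))"
  shows "length (fst v) = n"
  using compatible_read_dna_experiment[OF assms] assms(1)
  by (auto simp: words_def dest: compatible_length)

lemma nbhd_size_eq_sum_indicator:
  assumes "R k0 = v"
  shows "real (nbhd_size n N R k0) =
    (\<Sum>k\<in>words n \<times> {..<N} - {k0}.
      indicator {a. \<exists>z\<in>words n. compatible z a \<and> compatible z (fst v)} (fst (R k)))"
proof -
  have "{k \<in> words n \<times> {..<N}. k \<noteq> k0 \<and> share_neighbour n (R k) (R k0)} =
      (words n \<times> {..<N} - {k0}) \<inter> {k. fst (R k) \<in> {a. \<exists>z\<in>words n. compatible z a \<and> compatible z (fst v)}}"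
    using assms by (auto simp: share_neighbour_def)
  then show ?thesis
    by (simp add: nbhd_size_def indicator_def finite_read_indices)
qed

lemma map_pmf_read_address_cond_read:
  assumes k0: "k0 \<in> words n \<times> {..<N}" and k: "k \<in> words n \<times> {..<N}" "k \<noteq> k0"
    and v: "v \<in> set_pmf (map_pmf (\<lambda>(D, R). R k0) (dna_experiment n N L p))"
  shows "map_pmf (\<lambda>(D, R). fst (R k)) (cond_pmf (dna_experiment n N L p) {(D, R). R k0 = v}) =
    bec p (fst k)"
proof -
  have "map_pmf (\<lambda>\<omega>. (snd \<omega> k0, fst (snd \<omega> k))) (dna_experiment n N L p) =
      pair_pmf (map_pmf (\<lambda>\<omega>. snd \<omega> k0) (dna_experiment n N L p)) (bec p (fst k))"
    using map_pmf_read_address_pair_dna_experiment[OF k0 k] by (simp add: case_prod_unfold)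
  moreover have "v \<in> set_pmf (map_pmf (\<lambda>\<omega>. snd \<omega> k0) (dna_experiment n N L p))"
    using v by (simp add: case_prod_unfold)
  moreover have "{(D, R). R k0 = v} = {\<omega>. snd \<omega> k0 = v}"
    by auto
  ultimately show ?thesis
    unfolding case_prod_unfold by (simp only: map_pmf_cond_pmf_independent)
qed

lemma sum_read_indices_consistency_weight:
  assumes "k0 \<in> words n \<times> {..<N}" "compatible (fst k0) y"
  shows "(\<Sum>k\<in>words n \<times> {..<N} - {k0}. prod_list (map2 (consistency_weight p) (fst k) y)) =
    real N * erasure_weight p y - 1"
proof -
  have len: "length y = n"
    using assms by (auto simp: words_def dest: compatible_length)
  have "(\<Sum>k\<in>words n \<times> {..<N} - {k0}. prod_list (map2 (consistency_weight p) (fst k) y)) =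
      (\<Sum>k\<in>words n \<times> {..<N}. prod_list (map2 (consistency_weight p) (fst k) y)) - 1"
    using assms by (simp add: sum_diff1 finite_read_indices prod_list_consistency_weight_compatible)
  also have "\<dots> = (\<Sum>x\<in>words n. \<Sum>j<N. prod_list (map2 (consistency_weight p) x y)) - 1"
    unfolding sum.cartesian_product by (simp only: case_prod_unfold)
  also have "\<dots> = real N * erasure_weight p y - 1"
    using len by (simp add: sum_distrib_left[symmetric] sum_words_consistency_weight)
  finally show ?thesis .
qed

lemma expectation_nbhd_size_cond_read:
  fixes n N L :: nat and p :: real and v :: read
  defines "\<Omega> \<equiv> dna_experiment n N L p"
  assumes "0 \<le> p" "p \<le> 1" and k0: "k0 \<in> words n \<times> {..<N}"
    and v: "v \<in> set_pmf (map_pmf (\<lambda>(D, R). R k0) \<Omega>)"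
  shows "measure_pmf.expectation (cond_pmf \<Omega> {(D, R). R k0 = v})
      (\<lambda>(D, R). real (nbhd_size n N R k0)) = real N * erasure_weight p (fst v) - 1"
proof -
  define K where "K = words n \<times> {..<N}"
  define S where "S = {a. \<exists>z\<in>words n. compatible z a \<and> compatible z (fst v)}"
  define C where "C = cond_pmf \<Omega> {(D, R). R k0 = v}"
  define Y where "Y k = (\<lambda>(D :: bool list \<Rightarrow> bool list, R :: bool list \<times> nat \<Rightarrow> read). fst (R k))"
    for k
  have ne: "set_pmf \<Omega> \<inter> {(D, R). R k0 = v} \<noteq> {}"
    using v by auto
  have len: "length (fst v) = n"
    using length_read_dna_experiment[OF k0] v by (simp add: \<Omega>_def)
  have "measure_pmf.expectation C (\<lambda>(D, R). real (nbhd_size n N R k0)) =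
      measure_pmf.expectation C (\<lambda>\<omega>. \<Sum>k\<in>K - {k0}. indicator S (Y k \<omega>))"
  proof (rule integral_cong_AE)
    show "AE \<omega> in C. (case \<omega> of (D, R) \<Rightarrow> real (nbhd_size n N R k0)) =
        (\<Sum>k\<in>K - {k0}. indicator S (Y k \<omega>))"
      using nbhd_size_eq_sum_indicator
      by (intro AE_pmfI) (auto simp: C_def set_cond_pmf[OF ne] K_def S_def Y_def)
  qed simp_all
  also have "\<dots> = (\<Sum>k\<in>K - {k0}. measure_pmf.expectation C (\<lambda>\<omega>. indicator S (Y k \<omega>)))"
    by (rule Bochner_Integration.integral_sum)
       (auto intro: measure_pmf.integrable_const_bound[where B = 1] simp: indicator_def)
  also have "\<dots> = (\<Sum>k\<in>K - {k0}. measure_pmf.expectation (map_pmf (Y k) C) (indicator S))"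
    by (simp only: integral_map_pmf)
  also have "\<dots> = (\<Sum>k\<in>K - {k0}. measure_pmf.prob (bec p (fst k)) S)"
    using k0 v by (intro sum.cong refl)
      (simp add: C_def Y_def K_def \<Omega>_def map_pmf_read_address_cond_read)
  also have "\<dots> = (\<Sum>k\<in>K - {k0}. prod_list (map2 (consistency_weight p) (fst k) (fst v)))"
    using assms len by (intro sum.cong refl) (auto simp: S_def K_def intro!: prob_bec_share_neighbour)
  also have "\<dots> = real N * erasure_weight p (fst v) - 1"
    using k0 compatible_read_dna_experiment[OF k0] v
    by (simp add: K_def \<Omega>_def sum_read_indices_consistency_weight)
  finally show ?thesis
    by (simp add: C_def)
qed

lemma expectation_nbhd_size:
  fixes n N L :: nat and p :: real
  defines "\<Omega> \<equiv> dna_experiment n N L p"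
  assumes p: "0 \<le> p" "p \<le> 1" and k0: "k0 \<in> words n \<times> {..<N}"
  shows "measure_pmf.expectation \<Omega> (\<lambda>(D, R). real (nbhd_size n N R k0)) =
    real N * (1 + 2 * p - p\<^sup>2) ^ n - 1"
proof -
  define f where "f = (\<lambda>(D :: bool list \<Rightarrow> bool list, R). real (nbhd_size n N R k0))"
  have cond: "measure_pmf.expectation (cond_pmf \<Omega> {(D, R). R k0 = v}) f = real N * erasure_weight p (fst v) - 1"
    if "v \<in> set_pmf (map_pmf (\<lambda>(D, R). R k0) \<Omega>)" for v
    using expectation_nbhd_size_cond_read[OF p k0] that by (simp add: \<Omega>_def f_def)
  have address_law: "map_pmf (\<lambda>\<omega>. fst (snd \<omega> k0)) \<Omega> = bec p (fst k0)"
    using map_pmf_read_address_dna_experiment[OF k0] by (simp add: \<Omega>_def case_prod_unfold)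
  have "measure_pmf.expectation \<Omega> f =
      measure_pmf.expectation (map_pmf (\<lambda>\<omega>. snd \<omega> k0) \<Omega>)
        (\<lambda>v. measure_pmf.expectation (cond_pmf \<Omega> {\<omega>. snd \<omega> k0 = v}) f)"
    by (rule expectation_cond_pmf_total[where B = "card (words n \<times> {..<N})"])
       (auto simp: f_def nbhd_size_def intro!: card_mono finite_read_indices)
  also have "\<dots> = measure_pmf.expectation (map_pmf (\<lambda>\<omega>. snd \<omega> k0) \<Omega>)
      (\<lambda>v. real N * erasure_weight p (fst v) - 1)"
    using cond by (intro integral_cong_AE AE_pmfI) (auto simp: case_prod_unfold)
  also have "\<dots> = measure_pmf.expectation (bec p (fst k0)) (\<lambda>y. real N * erasure_weight p y - 1)"
    unfolding address_law[symmetric] by simp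
  also have "\<dots> = real N * (1 + 2 * p - p\<^sup>2) ^ n - 1"
    using k0 by (simp add: integrable_measure_pmf_finite finite_set_bec
        expectation_bec_erasure_weight[OF p] words_def mem_Times_iff)
  finally show ?thesis
    by (simp add: f_def)
qed

theorem lemma5:
  fixes n N L :: nat and p :: real and x0 :: "bool list" and j0 :: nat
  assumes "n \<ge> 1" and "N \<ge> 1" and "L \<ge> 1" and "0 < p" and "p < 1"
    and "x0 \<in> words n" and "j0 < N"
  shows "(\<forall>y d'. (y, d') \<in> set_pmf (map_pmf (\<lambda>(D, R). R (x0, j0)) (dna_experiment n N L p)) \<longrightarrow>
            measure_pmf.expectation
              (cond_pmf (dna_experiment n N L p) {(D, R). R (x0, j0) = (y, d')})
              (\<lambda>(D, R). real (nbhd_size n N R (x0, j0)))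
            = real N * 2 ^ num_erased y * (1 + p) ^ (n - num_erased y) - 1)
       \<and> measure_pmf.expectation (dna_experiment n N L p)
              (\<lambda>(D, R). real (nbhd_size n N R (x0, j0)))
            = real N * (1 + 2 * p - p ^ 2) ^ n - 1"
proof -
  have k0: "(x0, j0) \<in> words n \<times> {..<N}" and p: "0 \<le> p" "p \<le> 1"
    using assms by simp_all
  have "length y = n" if "(y, d') \<in> set_pmf (map_pmf (\<lambda>(D, R). R (x0, j0)) (dna_experiment n N L p))"
    for y d'
    using length_read_dna_experiment[OF k0 that] by simp
  then show ?thesis
    using expectation_nbhd_size_cond_read[OF p k0] expectation_nbhd_size[OF p k0]
    by (auto simp: erasure_weight_eq_power)
qed

end
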